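(* Let $\alpha,\beta,\gamma$ be independent random variables, each uniformly distributed on $[0,1]$, and let $s_A,s_B,s_C:[0,1]^2\to\{0,1,2,3\}$ be measurable functions. Set $a=s_A(\beta,\gamma)$, $b=s_B(\alpha,\gamma)$, $c=s_C(\alpha,\beta)$, and let $p_{abc}$ denote the resulting joint distribution of $(a,b,c)$, with one-party marginals $p(a)$, $p(b)$, $p(c)$. Suppose $p(a=0)=p(b=0)=p(c=0)=\tfrac14$ and $p_{000}=\tfrac18$. Then there exist measurable sets $X,Y,Z\subseteq[0,1]$, each of Lebesgue measure $\tfrac12$, such that $$\{(\alpha,\beta,\gamma)\in[0,1]^3:\ s_A(\beta,\gamma)=0,\ s_B(\alpha,\gamma)=0,\ s_C(\alpha,\beta)=0\}=X\times Y\times Z$$ up to a set of Lebesgue measure zero. Equivalently, after a measure-preserving relabeling of each coordinate axis, this event is the cube $[0,\tfrac12]^3$.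
   Context: This setting is the local (classical) model of the triangle network: three independent sources emit $\alpha,\beta,\gamma$. Party A receives $(\beta,\gamma)$, party B receives $(\alpha,\gamma)$, and party C receives $(\alpha,\beta)$. Each party outputs a value in $\{0,1,2,3\}$ by a deterministic measurable response function. Under these assumptions the Finner inequality $p_{abc}\le\sqrt{p(a)p(b)p(c)}$ holds, and the hypotheses mean that it is saturated for the outputs $(0,0,0)$. *)

theory Defs
  imports "HOL-Analysis.Analysis"
begin

text \<open>Since the cube [0,1]^3 has measure 1, the uniform
  joint distribution of independent uniform alpha, beta, gamma is just the
  restriction of this measure to the cube.\<close>

definition unit_iv :: "real set" where
  "unit_iv = {0..1}"

definition M3 :: "(real \<times> real \<times> real) measure" where
  "M3 = lborel \<Otimes>\<^sub>M (lborel \<Otimes>\<^sub>M lborel)"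

definition response :: "(real \<times> real \<Rightarrow> nat) \<Rightarrow> bool" where
  "response s \<longleftrightarrow>
     s \<in> measurable (restrict_space (lborel \<Otimes>\<^sub>M lborel) (unit_iv \<times> unit_iv)) (count_space UNIV)
   \<and> (\<forall>x\<in>unit_iv \<times> unit_iv. s x \<in> {0,1,2,3})"

definition cube :: "(real \<times> real \<times> real) set" where
  "cube = unit_iv \<times> unit_iv \<times> unit_iv"

end

theory Submission
  imports Defs
begin

text \<open>Condition on \<gamma>. Let a(\<gamma>), b(\<gamma>) be the measures of the \<gamma>-sections of the zero sets
  of A and B, and e(\<gamma>) that of the zero event. The e-section lies in the rectangle spanned by the
  a- and b-sections and inside the zero set of C, so e \<le> a b and e \<le> p(c=0) = 1/4, hence
  e \<le> (a + b)/4 by AM-GM. Integrating over \<gamma> gives p000 \<le> (p(a=0) + p(b=0))/4 = 1/8, so the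
  hypothesis forces equality for almost every \<gamma>. Equality leaves only (a, b) = (0, 0) or
  (1/2, 1/2), and in the second case the section of the event agrees a.e. both with the zero set
  of C and with the rectangle. So the zero set of C is a.e. one rectangle X \<times> Y, and the event
  is a.e. X \<times> Y \<times> Z with Z the set of \<gamma> where a = b = 1/2.\<close>

lemma emeasure_pair_measure_eq_nn_integral_slices:
  fixes L :: "'a measure" and M :: "'b measure" and N :: "'c measure"
  assumes "sigma_finite_measure L" "sigma_finite_measure M" "sigma_finite_measure N"
    and D[measurable]: "D \<in> sets (L \<Otimes>\<^sub>M (M \<Otimes>\<^sub>M N))"
  shows "emeasure (L \<Otimes>\<^sub>M (M \<Otimes>\<^sub>M N)) D
    = (\<integral>\<^sup>+ z. emeasure (L \<Otimes>\<^sub>M M) {(x, y). (x, y, z) \<in> D} \<partial>N)"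
proof -
  interpret L: sigma_finite_measure L by fact
  interpret M: sigma_finite_measure M by fact
  interpret N: sigma_finite_measure N by fact
  interpret MN: pair_sigma_finite M N ..
  interpret LN: pair_sigma_finite L N ..
  have MN_sf: "sigma_finite_measure (M \<Otimes>\<^sub>M N)"
    by (intro sigma_finite_pair_measure) fact+
  have "emeasure (L \<Otimes>\<^sub>M (M \<Otimes>\<^sub>M N)) D
      = (\<integral>\<^sup>+ x. \<integral>\<^sup>+ p. indicator D (x, p) \<partial>(M \<Otimes>\<^sub>M N) \<partial>L)"
    using sigma_finite_measure.nn_integral_fst[OF MN_sf, of "indicator D" L] by simp
  also have "\<dots> = (\<integral>\<^sup>+ x. \<integral>\<^sup>+ z. \<integral>\<^sup>+ y. indicator D (x, y, z) \<partial>M \<partial>N \<partial>L)"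
    by (intro nn_integral_cong) (simp add: MN.nn_integral_snd[symmetric])
  also have "\<dots> = (\<integral>\<^sup>+ z. \<integral>\<^sup>+ x. \<integral>\<^sup>+ y. indicator D (x, y, z) \<partial>M \<partial>L \<partial>N)"
    by (rule LN.Fubini'[symmetric]) measurable
  also have "\<dots> = (\<integral>\<^sup>+ z. emeasure (L \<Otimes>\<^sub>M M) {(x, y). (x, y, z) \<in> D} \<partial>N)"
  proof (intro nn_integral_cong)
    fix z assume "z \<in> space N"
    then have "{(x, y). (x, y, z) \<in> D} = (\<lambda>(x, y). (x, y, z)) -` D \<inter> space (L \<Otimes>\<^sub>M M)"
      using sets.sets_into_space[OF D] by (auto simp: space_pair_measure)
    also have "\<dots> \<in> sets (L \<Otimes>\<^sub>M M)"
      using \<open>z \<in> space N\<close> by measurable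
    finally have slice: "{(x, y). (x, y, z) \<in> D} \<in> sets (L \<Otimes>\<^sub>M M)" .
    have "(\<integral>\<^sup>+ x. \<integral>\<^sup>+ y. indicator D (x, y, z) \<partial>M \<partial>L)
        = (\<integral>\<^sup>+ x. \<integral>\<^sup>+ y. indicator {(x, y). (x, y, z) \<in> D} (x, y) \<partial>M \<partial>L)"
      by (simp add: indicator_def)
    also have "\<dots> = emeasure (L \<Otimes>\<^sub>M M) {(x, y). (x, y, z) \<in> D}"
      using M.nn_integral_fst[of "indicator {(x, y). (x, y, z) \<in> D}" L] slice by simp
    finally show "(\<integral>\<^sup>+ x. \<integral>\<^sup>+ y. indicator D (x, y, z) \<partial>M \<partial>L)
        = emeasure (L \<Otimes>\<^sub>M M) {(x, y). (x, y, z) \<in> D}" .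
  qed
  finally show ?thesis .
qed

lemma measurable_measure_slice:
  assumes "sigma_finite_measure M" and S[measurable]: "S \<in> sets (M \<Otimes>\<^sub>M N)"
  shows "(\<lambda>z. measure M {x. (x, z) \<in> S}) \<in> borel_measurable N"
proof -
  interpret sigma_finite_measure M by fact
  let ?S' = "(\<lambda>(z, x). (x, z)) -` S \<inter> space (N \<Otimes>\<^sub>M M)"
  have "(\<lambda>z. emeasure M (Pair z -` ?S')) \<in> borel_measurable N"
    by (rule measurable_emeasure_Pair) measurable
  moreover have "Pair z -` ?S' = {x. (x, z) \<in> S}" if "z \<in> space N" for z
    using that sets.sets_into_space[OF S] by (auto simp: space_pair_measure)
  ultimately show ?thesis
    unfolding measure_def by (subst measurable_cong[where g="\<lambda>z. enn2real (emeasure M (Pair z -` ?S'))"]) auto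
qed

lemma (in sigma_finite_measure) measure_pair_measure_Times:
  assumes "A \<in> sets N" "B \<in> sets M"
  shows "measure (N \<Otimes>\<^sub>M M) (A \<times> B) = measure N A * measure M B"
  using assms by (simp add: measure_def emeasure_pair_measure_Times enn2real_mult)

lemma mult_le_square_mean:
  fixes a b :: real
  shows "a * b \<le> ((a + b) / 2)\<^sup>2"
proof -
  have "((a + b) / 2)\<^sup>2 - a * b = ((a - b) / 2)\<^sup>2"
    by (simp add: power2_eq_square field_simps)
  then show ?thesis
    using zero_le_power2[of "(a - b) / 2"] by linarith
qed

lemma le_scaled_mean_if_le_mult_le_square:
  fixes a b c v :: real
  assumes "0 \<le> a" "0 \<le> b" "0 \<le> c" "v \<le> a * b" "v \<le> c\<^sup>2"
  shows "v \<le> c * (a + b) / 2"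
proof (cases "v \<le> 0")
  case True
  moreover have "0 \<le> c * (a + b) / 2"
    using assms(1-3) by simp
  ultimately show ?thesis by linarith
next
  case False
  have "v\<^sup>2 \<le> (a * b) * c\<^sup>2"
    using assms False unfolding power2_eq_square by (intro mult_mono) auto
  also have "\<dots> \<le> ((a + b) / 2)\<^sup>2 * c\<^sup>2"
    by (rule mult_right_mono[OF mult_le_square_mean zero_le_power2])
  also have "\<dots> = (c * (a + b) / 2)\<^sup>2"
    unfolding power2_eq_square by (simp add: field_simps)
  finally have "v\<^sup>2 \<le> (c * (a + b) / 2)\<^sup>2" .
  moreover have "0 \<le> c * (a + b) / 2"
    using assms(1-3) by simp
  ultimately show ?thesis
    by (rule power2_le_imp_le)
qed

lemma eq_scaled_mean_cases:
  fixes a b c v :: real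
  assumes "0 \<le> a" "0 \<le> b" "0 < c" "v \<le> a * b" "v \<le> c\<^sup>2" "v = c * (a + b) / 2"
  shows "(a = 0 \<and> b = 0) \<or> (a = c \<and> b = c)"
proof -
  have "c * ((a + b) / 2) \<le> c * c"
    using assms(5,6) by (simp add: power2_eq_square)
  then have sum_le: "(a + b) / 2 \<le> c"
    using assms(3) by (rule mult_left_le_imp_le)
  have "c * (a + b) / 2 \<le> ((a + b) / 2)\<^sup>2"
    using assms(4,6) mult_le_square_mean[of a b] by linarith
  then have "(a + b) * c \<le> (a + b) * ((a + b) / 2)"
    by (simp add: power2_eq_square field_simps)
  then have "a + b = 0 \<or> c \<le> (a + b) / 2"
    using assms(1,2) by (smt (verit) mult_le_cancel_left)
  then show ?thesis
  proof
    assume "a + b = 0"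
    then show ?thesis using assms(1,2) by linarith
  next
    assume "c \<le> (a + b) / 2"
    then have mean: "(a + b) / 2 = c"
      using sum_le by linarith
    have "((a - b) / 2)\<^sup>2 = ((a + b) / 2)\<^sup>2 - a * b"
      by (simp add: power2_eq_square field_simps)
    also have "\<dots> \<le> 0"
      using assms(4-6) mean by (simp add: power2_eq_square)
    finally have "a = b" by simp
    then show ?thesis using mean by simp
  qed
qed

lemma null_sets_Diff_of_measure_eq:
  assumes "A \<subseteq> B" "A \<in> sets M" "B \<in> fmeasurable M" "measure M A = measure M B"
  shows "B - A \<in> null_sets M"
proof -
  have "B - A \<in> fmeasurable M"
    using assms by (intro fmeasurable_Diff) auto
  moreover have "measure M (B - A) = 0"
    using assms measure_Diff[of M B A] by (simp add: fmeasurableD2 fmeasurableD)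
  ultimately show ?thesis
    by (simp add: null_sets_def emeasure_eq_measure2 fmeasurableD)
qed

abbreviation lborel2 :: "(real \<times> real) measure" where
  "lborel2 \<equiv> lborel \<Otimes>\<^sub>M lborel"

lemma emeasure_M3_eq_nn_integral_slices:
  "D \<in> sets M3 \<Longrightarrow> emeasure M3 D = (\<integral>\<^sup>+ \<gamma>. emeasure lborel2 {(\<alpha>, \<beta>). (\<alpha>, \<beta>, \<gamma>) \<in> D} \<partial>lborel)"
  unfolding M3_def
  by (intro emeasure_pair_measure_eq_nn_integral_slices lborel.sigma_finite_measure_axioms)

lemma emeasure_M3_eq_0_if_AE_slices_null:
  assumes "D \<in> sets M3" "AE \<gamma> in lborel. {(\<alpha>, \<beta>). (\<alpha>, \<beta>, \<gamma>) \<in> D} \<in> null_sets lborel2"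
  shows "emeasure M3 D = 0"
proof -
  have "AE \<gamma> in lborel. emeasure lborel2 {(\<alpha>, \<beta>). (\<alpha>, \<beta>, \<gamma>) \<in> D} = 0"
    using assms(2) by eventually_elim (simp add: null_sets_def)
  then show ?thesis
    by (simp add: emeasure_M3_eq_nn_integral_slices[OF assms(1)] nn_integral_cong_AE[where v="\<lambda>_. 0"])
qed

lemma emeasure_unit_iv [simp]: "emeasure lborel unit_iv = 1"
  by (simp add: unit_iv_def)

lemma sets_unit_iv [measurable]: "unit_iv \<in> sets borel"
  by (simp add: unit_iv_def)

lemma sets_lborel_unit_iv: "unit_iv \<in> sets lborel"
  by (simp add: unit_iv_def)

lemma sets_Collect_of_pred: "Measurable.pred M P \<Longrightarrow> space M = UNIV \<Longrightarrow> {x. P x} \<in> sets M"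
  by (simp add: pred_def)

lemma unit_iv_fmeasurable: "unit_iv \<in> fmeasurable lborel"
  by (intro fmeasurableI) (simp_all add: unit_iv_def)

lemma unit_square_fmeasurable: "unit_iv \<times> unit_iv \<in> fmeasurable lborel2"
  by (intro fmeasurableI) (simp_all add: unit_iv_def lborel.emeasure_pair_measure_Times)

lemma sigma_finite_lborel2: "sigma_finite_measure lborel2"
  by (intro sigma_finite_pair_measure lborel.sigma_finite_measure_axioms)

lemma cube_fmeasurable: "cube \<in> fmeasurable M3"
  unfolding cube_def M3_def
  by (intro fmeasurableI)
    (simp_all add: unit_iv_def lborel.emeasure_pair_measure_Times
      sigma_finite_measure.emeasure_pair_measure_Times[OF sigma_finite_lborel2])

text \<open>SA, SB, SC are the zero sets of the three response functions.\<close>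

locale triangle_events =
  fixes SA SB SC :: "(real \<times> real) set"
  assumes sets_SA [measurable]: "SA \<in> sets lborel2"
    and sets_SB [measurable]: "SB \<in> sets lborel2"
    and sets_SC [measurable]: "SC \<in> sets lborel2"
    and SA_subset: "SA \<subseteq> unit_iv \<times> unit_iv"
    and SB_subset: "SB \<subseteq> unit_iv \<times> unit_iv"
    and SC_subset: "SC \<subseteq> unit_iv \<times> unit_iv"
begin

definition event :: "(real \<times> real \<times> real) set" where
  "event = {(\<alpha>, \<beta>, \<gamma>). (\<beta>, \<gamma>) \<in> SA \<and> (\<alpha>, \<gamma>) \<in> SB \<and> (\<alpha>, \<beta>) \<in> SC}"

definition event_A :: "(real \<times> real \<times> real) set" where
  "event_A = {(\<alpha>, \<beta>, \<gamma>). \<alpha> \<in> unit_iv \<and> (\<beta>, \<gamma>) \<in> SA}"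

definition event_B :: "(real \<times> real \<times> real) set" where
  "event_B = {(\<alpha>, \<beta>, \<gamma>). \<beta> \<in> unit_iv \<and> (\<alpha>, \<gamma>) \<in> SB}"

definition event_C :: "(real \<times> real \<times> real) set" where
  "event_C = {(\<alpha>, \<beta>, \<gamma>). \<gamma> \<in> unit_iv \<and> (\<alpha>, \<beta>) \<in> SC}"

definition slice_A :: "real \<Rightarrow> real set" where
  "slice_A \<gamma> = {\<beta>. (\<beta>, \<gamma>) \<in> SA}"

definition slice_B :: "real \<Rightarrow> real set" where
  "slice_B \<gamma> = {\<alpha>. (\<alpha>, \<gamma>) \<in> SB}"

definition slice :: "real \<Rightarrow> (real \<times> real) set" where
  "slice \<gamma> = {(\<alpha>, \<beta>). (\<alpha>, \<beta>, \<gamma>) \<in> event}"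

definition pA :: "real \<Rightarrow> real" where
  "pA \<gamma> = measure lborel (slice_A \<gamma>)"

definition pB :: "real \<Rightarrow> real" where
  "pB \<gamma> = measure lborel (slice_B \<gamma>)"

definition pE :: "real \<Rightarrow> real" where
  "pE \<gamma> = measure lborel2 (slice \<gamma>)"

definition pC :: real where
  "pC = measure lborel2 SC"

lemma sets_event [measurable]: "event \<in> sets M3"
  unfolding event_def by (intro sets_Collect_of_pred) (auto simp: M3_def space_pair_measure)

lemma sets_event_A [measurable]: "event_A \<in> sets M3"
  unfolding event_A_def by (intro sets_Collect_of_pred) (auto simp: M3_def space_pair_measure)

lemma sets_event_B [measurable]: "event_B \<in> sets M3"
  unfolding event_B_def by (intro sets_Collect_of_pred) (auto simp: M3_def space_pair_measure)

lemma sets_event_C [measurable]: "event_C \<in> sets M3"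
  unfolding event_C_def by (intro sets_Collect_of_pred) (auto simp: M3_def space_pair_measure)

lemma sets_slice_A [measurable]: "slice_A \<gamma> \<in> sets lborel"
  unfolding slice_A_def by measurable

lemma sets_slice_B [measurable]: "slice_B \<gamma> \<in> sets lborel"
  unfolding slice_B_def by measurable

lemma sets_slice [measurable]: "slice \<gamma> \<in> sets lborel2"
  unfolding slice_def event_def by (intro sets_Collect_of_pred) (auto simp: space_pair_measure)

lemma slice_A_subset: "slice_A \<gamma> \<subseteq> unit_iv"
  using SA_subset by (auto simp: slice_A_def)

lemma slice_B_subset: "slice_B \<gamma> \<subseteq> unit_iv"
  using SB_subset by (auto simp: slice_B_def)

lemma slice_subset_Times: "slice \<gamma> \<subseteq> slice_B \<gamma> \<times> slice_A \<gamma>"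
  by (auto simp: slice_def event_def slice_A_def slice_B_def)

lemma slice_subset_SC: "slice \<gamma> \<subseteq> SC"
  by (auto simp: slice_def event_def)

lemma SC_fmeasurable: "SC \<in> fmeasurable lborel2"
  by (rule fmeasurableI2[OF unit_square_fmeasurable SC_subset sets_SC])

lemma slice_fmeasurable: "slice \<gamma> \<in> fmeasurable lborel2"
  by (rule fmeasurableI2[OF SC_fmeasurable slice_subset_SC sets_slice])

lemma emeasure_slice_A: "emeasure lborel (slice_A \<gamma>) = pA \<gamma>"
  unfolding pA_def by (intro emeasure_eq_measure2 fmeasurableI2[OF unit_iv_fmeasurable slice_A_subset sets_slice_A])

lemma emeasure_slice_B: "emeasure lborel (slice_B \<gamma>) = pB \<gamma>"
  unfolding pB_def by (intro emeasure_eq_measure2 fmeasurableI2[OF unit_iv_fmeasurable slice_B_subset sets_slice_B])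

lemma emeasure_slice: "emeasure lborel2 (slice \<gamma>) = pE \<gamma>"
  unfolding pE_def by (intro emeasure_eq_measure2 slice_fmeasurable)

lemma sets_Times_slices [measurable]: "slice_B \<gamma> \<times> slice_A \<gamma> \<in> sets lborel2"
  by measurable

lemma Times_slices_fmeasurable: "slice_B \<gamma> \<times> slice_A \<gamma> \<in> fmeasurable lborel2"
  using slice_A_subset slice_B_subset
  by (intro fmeasurableI2[OF unit_square_fmeasurable _ sets_Times_slices]) auto

lemma measure_Times_slices: "measure lborel2 (slice_B \<gamma> \<times> slice_A \<gamma>) = pB \<gamma> * pA \<gamma>"
  using lborel.measure_pair_measure_Times[OF sets_slice_B sets_slice_A] by (simp add: pA_def pB_def)

lemma pE_le_pB_pA: "pE \<gamma> \<le> pB \<gamma> * pA \<gamma>"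
  unfolding pE_def measure_Times_slices[symmetric]
  by (rule measure_mono_fmeasurable[OF slice_subset_Times sets_slice Times_slices_fmeasurable])

lemma pE_le_pC: "pE \<gamma> \<le> pC"
  unfolding pE_def pC_def by (rule measure_mono_fmeasurable[OF slice_subset_SC sets_slice SC_fmeasurable])

lemma borel_measurable_pA [measurable]: "pA \<in> borel_measurable lborel"
  unfolding pA_def slice_A_def
  by (rule measurable_measure_slice[OF lborel.sigma_finite_measure_axioms sets_SA])

lemma borel_measurable_pB [measurable]: "pB \<in> borel_measurable lborel"
  unfolding pB_def slice_B_def
  by (rule measurable_measure_slice[OF lborel.sigma_finite_measure_axioms sets_SB])

lemma borel_measurable_pE [measurable]: "pE \<in> borel_measurable lborel"
proof -
  let ?S = "{(p, \<gamma>). (fst p, snd p, \<gamma>) \<in> event}"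
  have "?S \<in> sets (lborel2 \<Otimes>\<^sub>M lborel)"
    unfolding event_def by (intro sets_Collect_of_pred) (auto simp: space_pair_measure)
  then have "(\<lambda>\<gamma>. measure lborel2 {p. (p, \<gamma>) \<in> ?S}) \<in> borel_measurable lborel"
    by (rule measurable_measure_slice[OF sigma_finite_lborel2])
  moreover have "{p. (p, \<gamma>) \<in> ?S} = slice \<gamma>" for \<gamma>
    by (auto simp: slice_def)
  ultimately show ?thesis
    unfolding pE_def by simp
qed

lemma pA_nonneg: "0 \<le> pA \<gamma>"
  by (simp add: pA_def)

lemma pB_nonneg: "0 \<le> pB \<gamma>"
  by (simp add: pB_def)

lemma pE_nonneg: "0 \<le> pE \<gamma>"
  by (simp add: pE_def)

lemma event_subset_cube: "event \<subseteq> cube"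
  using SA_subset SB_subset by (auto simp: event_def cube_def)

lemma event_A_subset_cube: "event_A \<subseteq> cube"
  using SA_subset by (auto simp: event_A_def cube_def)

lemma event_B_subset_cube: "event_B \<subseteq> cube"
  using SB_subset by (auto simp: event_B_def cube_def)

lemma nn_integral_pA: "(\<integral>\<^sup>+ \<gamma>. pA \<gamma> \<partial>lborel) = emeasure M3 event_A"
proof -
  have "{(\<alpha>, \<beta>). (\<alpha>, \<beta>, \<gamma>) \<in> event_A} = unit_iv \<times> slice_A \<gamma>" for \<gamma>
    by (auto simp: event_A_def slice_A_def)
  moreover have "emeasure lborel2 (unit_iv \<times> slice_A \<gamma>) = pA \<gamma>" for \<gamma>
    using lborel.emeasure_pair_measure_Times[OF sets_lborel_unit_iv sets_slice_A] by (simp add: emeasure_slice_A)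
  ultimately show ?thesis
    by (simp add: emeasure_M3_eq_nn_integral_slices)
qed

lemma nn_integral_pB: "(\<integral>\<^sup>+ \<gamma>. pB \<gamma> \<partial>lborel) = emeasure M3 event_B"
proof -
  have "{(\<alpha>, \<beta>). (\<alpha>, \<beta>, \<gamma>) \<in> event_B} = slice_B \<gamma> \<times> unit_iv" for \<gamma>
    by (auto simp: event_B_def slice_B_def)
  moreover have "emeasure lborel2 (slice_B \<gamma> \<times> unit_iv) = pB \<gamma>" for \<gamma>
    using lborel.emeasure_pair_measure_Times[OF sets_slice_B sets_lborel_unit_iv] by (simp add: emeasure_slice_B)
  ultimately show ?thesis
    by (simp add: emeasure_M3_eq_nn_integral_slices)
qed

lemma nn_integral_pE: "(\<integral>\<^sup>+ \<gamma>. pE \<gamma> \<partial>lborel) = emeasure M3 event"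
  by (simp add: emeasure_M3_eq_nn_integral_slices emeasure_slice[symmetric] slice_def)

lemma measure_event_C: "measure M3 event_C = pC"
proof -
  have "{(\<alpha>, \<beta>). (\<alpha>, \<beta>, \<gamma>) \<in> event_C} = (if \<gamma> \<in> unit_iv then SC else {})" for \<gamma>
    by (auto simp: event_C_def)
  then have "emeasure M3 event_C = (\<integral>\<^sup>+ \<gamma>. ennreal pC * indicator unit_iv \<gamma> \<partial>lborel)"
    using SC_fmeasurable
    by (auto simp: emeasure_M3_eq_nn_integral_slices pC_def emeasure_eq_measure2 intro!: nn_integral_cong)
  also have "\<dots> = ennreal pC"
    by (simp add: nn_integral_cmult_indicator)
  finally show ?thesis
    by (simp add: measure_def pC_def)
qed

lemma has_bochner_integral_pA: "has_bochner_integral lborel pA (measure M3 event_A)"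
  using fmeasurableI2[OF cube_fmeasurable event_A_subset_cube sets_event_A]
  by (intro has_bochner_integral_nn_integral) (simp_all add: pA_nonneg nn_integral_pA emeasure_eq_measure2)

lemma has_bochner_integral_pB: "has_bochner_integral lborel pB (measure M3 event_B)"
  using fmeasurableI2[OF cube_fmeasurable event_B_subset_cube sets_event_B]
  by (intro has_bochner_integral_nn_integral) (simp_all add: pB_nonneg nn_integral_pB emeasure_eq_measure2)

lemma has_bochner_integral_pE: "has_bochner_integral lborel pE (measure M3 event)"
  using fmeasurableI2[OF cube_fmeasurable event_subset_cube sets_event]
  by (intro has_bochner_integral_nn_integral) (simp_all add: pE_nonneg nn_integral_pE emeasure_eq_measure2)

lemma AE_slices_null_or_half:
  assumes "measure M3 event_A = 1/4" "measure M3 event_B = 1/4"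
    and "measure M3 event_C = 1/4" "measure M3 event = 1/8"
  shows "AE \<gamma> in lborel. (pA \<gamma> = 0 \<and> pB \<gamma> = 0 \<and> pE \<gamma> = 0)
    \<or> (pA \<gamma> = 1/2 \<and> pB \<gamma> = 1/2 \<and> pE \<gamma> = 1/4)"
proof -
  have pC: "pC = (1/2)\<^sup>2"
    using assms(3) measure_event_C by (simp add: power2_eq_square)
  have pE_le: "pE \<gamma> \<le> pA \<gamma> * pB \<gamma>" "pE \<gamma> \<le> (1/2)\<^sup>2" for \<gamma>
    using pE_le_pB_pA[of \<gamma>] pE_le_pC[of \<gamma>] pC by (simp_all add: mult.commute)
  define w where "w = (\<lambda>\<gamma>. 1/2 * (pA \<gamma> + pB \<gamma>) / 2 - pE \<gamma>)"
  have w_nonneg: "0 \<le> w \<gamma>" for \<gamma>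
    using le_scaled_mean_if_le_mult_le_square[OF pA_nonneg pB_nonneg _ pE_le] by (simp add: w_def)
  have "integrable lborel pA" "integrable lborel pB" "integrable lborel pE"
    and "integral\<^sup>L lborel pA = 1/4" "integral\<^sup>L lborel pB = 1/4" "integral\<^sup>L lborel pE = 1/8"
    using has_bochner_integral_pA has_bochner_integral_pB has_bochner_integral_pE assms
    by (simp_all add: has_bochner_integral_iff)
  then have "integrable lborel w" "integral\<^sup>L lborel w = 0"
    by (simp_all add: w_def)
  then have "AE \<gamma> in lborel. w \<gamma> = 0"
    using integral_nonneg_eq_0_iff_AE w_nonneg by blast
  then show ?thesis
  proof eventually_elim
    case (elim \<gamma>)
    then have pE_eq: "pE \<gamma> = 1/2 * (pA \<gamma> + pB \<gamma>) / 2"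
      by (simp add: w_def)
    have "(pA \<gamma> = 0 \<and> pB \<gamma> = 0) \<or> (pA \<gamma> = 1/2 \<and> pB \<gamma> = 1/2)"
      by (rule eq_scaled_mean_cases[OF pA_nonneg pB_nonneg _ pE_le pE_eq]) simp
    then show ?case
      using pE_eq by auto
  qed
qed

definition half_slices :: "real set" where
  "half_slices = {\<gamma>. pA \<gamma> = 1/2 \<and> pB \<gamma> = 1/2 \<and> pE \<gamma> = 1/4}"

lemma sets_half_slices [measurable]: "half_slices \<in> sets lborel"
  unfolding half_slices_def by (intro sets_Collect_of_pred) simp_all

lemma half_slices_subset: "half_slices \<subseteq> unit_iv"
proof
  fix \<gamma> assume "\<gamma> \<in> half_slices"
  then have "slice_A \<gamma> \<noteq> {}"
    by (auto simp: half_slices_def pA_def)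
  then show "\<gamma> \<in> unit_iv"
    using SA_subset by (auto simp: slice_A_def)
qed

lemma measure_half_slices:
  assumes "measure M3 event_A = 1/4" "measure M3 event_B = 1/4"
    and "measure M3 event_C = 1/4" "measure M3 event = 1/8"
  shows "measure lborel half_slices = 1/2"
proof -
  have "AE \<gamma> in lborel. pA \<gamma> = 1/2 * indicator half_slices \<gamma>"
    using AE_slices_null_or_half[OF assms] by eventually_elim (auto simp: half_slices_def)
  then have "integral\<^sup>L lborel pA = integral\<^sup>L lborel (\<lambda>\<gamma>. 1/2 * indicator half_slices \<gamma>)"
    by (intro integral_cong_AE) simp_all
  also have "\<dots> = 1/2 * measure lborel half_slices"
    by simp
  finally show ?thesis
    using has_bochner_integral_pA assms(1) by (simp add: has_bochner_integral_iff)
qed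

lemma slice_null_if_pA_eq_0:
  assumes "pA \<gamma> = 0"
  shows "slice \<gamma> \<in> null_sets lborel2"
proof (rule null_sets_subset[OF _ sets_slice slice_subset_Times])
  show "slice_B \<gamma> \<times> slice_A \<gamma> \<in> null_sets lborel2"
    using assms Times_slices_fmeasurable sets_Times_slices
    by (simp add: null_sets_def emeasure_eq_measure2 measure_Times_slices)
qed

lemma SC_ae_subset_slice:
  assumes "pE \<gamma> = pC"
  shows "SC - slice \<gamma> \<in> null_sets lborel2"
  using assms unfolding pE_def pC_def
  by (rule null_sets_Diff_of_measure_eq[OF slice_subset_SC sets_slice SC_fmeasurable])

lemma SC_ae_eq_Times_slices:
  assumes "\<gamma> \<in> half_slices" "pC = 1/4"
  shows "sym_diff SC (slice_B \<gamma> \<times> slice_A \<gamma>) \<in> null_sets lborel2"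
proof -
  have half: "pA \<gamma> = 1/2" "pB \<gamma> = 1/2" "pE \<gamma> = 1/4"
    using assms(1) by (auto simp: half_slices_def)
  have "slice_B \<gamma> \<times> slice_A \<gamma> - slice \<gamma> \<in> null_sets lborel2"
    by (intro null_sets_Diff_of_measure_eq[OF slice_subset_Times sets_slice Times_slices_fmeasurable])
      (simp add: half pE_def[symmetric] measure_Times_slices)
  with SC_ae_subset_slice[of \<gamma>] show ?thesis
    using half assms(2) slice_subset_SC slice_subset_Times sets_SC sets_Times_slices
    by (rule_tac null_sets_subset[where B="(SC - slice \<gamma>) \<union> (slice_B \<gamma> \<times> slice_A \<gamma> - slice \<gamma>)"]) auto
qed

lemma slice_ae_eq_Times_slices:
  assumes "\<gamma> \<in> half_slices" "\<gamma>\<^sub>0 \<in> half_slices" "pC = 1/4"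
  shows "sym_diff (slice \<gamma>) (slice_B \<gamma>\<^sub>0 \<times> slice_A \<gamma>\<^sub>0) \<in> null_sets lborel2"
proof -
  have "SC - slice \<gamma> \<in> null_sets lborel2"
    using assms(1,3) by (intro SC_ae_subset_slice) (simp add: half_slices_def)
  with SC_ae_eq_Times_slices[OF assms(2,3)] show ?thesis
    using slice_subset_SC sets_SC sets_Times_slices sets_slice
    by (rule_tac null_sets_subset[where B="sym_diff SC (slice_B \<gamma>\<^sub>0 \<times> slice_A \<gamma>\<^sub>0) \<union> (SC - slice \<gamma>)"]) auto
qed

lemma event_ae_eq_Times:
  assumes "measure M3 event_A = 1/4" "measure M3 event_B = 1/4"
    and "measure M3 event_C = 1/4" "measure M3 event = 1/8"
  obtains X Y Z where "X \<in> sets lborel" "Y \<in> sets lborel" "Z \<in> sets lborel"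
    "X \<subseteq> unit_iv" "Y \<subseteq> unit_iv" "Z \<subseteq> unit_iv"
    "measure lborel X = 1/2" "measure lborel Y = 1/2" "measure lborel Z = 1/2"
    "emeasure M3 (sym_diff event (X \<times> Y \<times> Z)) = 0"
proof -
  have pC: "pC = 1/4"
    using assms(3) measure_event_C by simp
  have "half_slices \<noteq> {}"
    using measure_half_slices[OF assms] by auto
  then obtain \<gamma>\<^sub>0 where \<gamma>\<^sub>0: "\<gamma>\<^sub>0 \<in> half_slices"
    by blast
  let ?X = "slice_B \<gamma>\<^sub>0" and ?Y = "slice_A \<gamma>\<^sub>0"
  have "AE \<gamma> in lborel.
      {(\<alpha>, \<beta>). (\<alpha>, \<beta>, \<gamma>) \<in> sym_diff event (?X \<times> ?Y \<times> half_slices)} \<in> null_sets lborel2"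
    using AE_slices_null_or_half[OF assms]
  proof eventually_elim
    case (elim \<gamma>)
    show ?case
    proof (cases "\<gamma> \<in> half_slices")
      case True
      then have "{(\<alpha>, \<beta>). (\<alpha>, \<beta>, \<gamma>) \<in> sym_diff event (?X \<times> ?Y \<times> half_slices)}
          = sym_diff (slice \<gamma>) (?X \<times> ?Y)"
        by (auto simp: slice_def)
      then show ?thesis
        using slice_ae_eq_Times_slices[OF True \<gamma>\<^sub>0 pC] by simp
    next
      case False
      then have "{(\<alpha>, \<beta>). (\<alpha>, \<beta>, \<gamma>) \<in> sym_diff event (?X \<times> ?Y \<times> half_slices)} = slice \<gamma>"
        by (auto simp: slice_def)
      moreover have "pA \<gamma> = 0"
        using elim False by (auto simp: half_slices_def)
      ultimately show ?thesis
        using slice_null_if_pA_eq_0 by simp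
    qed
  qed
  moreover have "?X \<times> ?Y \<times> half_slices \<in> sets M3"
    unfolding M3_def by measurable
  ultimately have "emeasure M3 (sym_diff event (?X \<times> ?Y \<times> half_slices)) = 0"
    by (intro emeasure_M3_eq_0_if_AE_slices_null) auto
  moreover have "measure lborel ?X = 1/2" "measure lborel ?Y = 1/2"
    using \<gamma>\<^sub>0 by (simp_all add: half_slices_def pA_def pB_def)
  ultimately show ?thesis
    using measure_half_slices[OF assms] sets_slice_A sets_slice_B sets_half_slices
      slice_A_subset slice_B_subset half_slices_subset
    by (intro that[of ?X ?Y half_slices]) simp_all
qed

end

lemma sets_response_zero_set:
  assumes "response s"
  shows "{x \<in> unit_iv \<times> unit_iv. s x = 0} \<in> sets lborel2"
proof -
  have "s -` {0} \<inter> space (restrict_space lborel2 (unit_iv \<times> unit_iv))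
      \<in> sets (restrict_space lborel2 (unit_iv \<times> unit_iv))"
    using assms unfolding response_def by (intro measurable_sets) auto
  then show ?thesis
    by (simp add: sets_restrict_space_iff space_restrict_space space_pair_measure
        unit_iv_def Int_def vimage_def conj_commute)
qed

theorem lemma1:
  fixes sA sB sC :: "real \<times> real \<Rightarrow> nat"
  assumes "response sA" and "response sB" and "response sC"
    and "measure M3 {(\<alpha>,\<beta>,\<gamma>) \<in> cube. sA (\<beta>,\<gamma>) = 0} = 1/4"
    and "measure M3 {(\<alpha>,\<beta>,\<gamma>) \<in> cube. sB (\<alpha>,\<gamma>) = 0} = 1/4"
    and "measure M3 {(\<alpha>,\<beta>,\<gamma>) \<in> cube. sC (\<alpha>,\<beta>) = 0} = 1/4"
    and "measure M3 {(\<alpha>,\<beta>,\<gamma>) \<in> cube. sA (\<beta>,\<gamma>) = 0 \<and> sB (\<alpha>,\<gamma>) = 0 \<and> sC (\<alpha>,\<beta>) = 0} = 1/8"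
  shows "\<exists>X Y Z. X \<in> sets lborel \<and> Y \<in> sets lborel \<and> Z \<in> sets lborel
          \<and> X \<subseteq> unit_iv \<and> Y \<subseteq> unit_iv \<and> Z \<subseteq> unit_iv
          \<and> measure lborel X = 1/2 \<and> measure lborel Y = 1/2 \<and> measure lborel Z = 1/2
          \<and> (let E = {(\<alpha>,\<beta>,\<gamma>) \<in> cube. sA (\<beta>,\<gamma>) = 0 \<and> sB (\<alpha>,\<gamma>) = 0 \<and> sC (\<alpha>,\<beta>) = 0}
             in emeasure M3 ((E - X \<times> Y \<times> Z) \<union> (X \<times> Y \<times> Z - E)) = 0)"
proof -
  let ?zero = "\<lambda>s. {x \<in> unit_iv \<times> unit_iv. s x = 0}"
  interpret triangle_events "?zero sA" "?zero sB" "?zero sC"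
    using sets_response_zero_set[OF assms(1)] sets_response_zero_set[OF assms(2)]
      sets_response_zero_set[OF assms(3)]
    by unfold_locales auto
  have "event_A = {(\<alpha>,\<beta>,\<gamma>) \<in> cube. sA (\<beta>,\<gamma>) = 0}"
    and "event_B = {(\<alpha>,\<beta>,\<gamma>) \<in> cube. sB (\<alpha>,\<gamma>) = 0}"
    and "event_C = {(\<alpha>,\<beta>,\<gamma>) \<in> cube. sC (\<alpha>,\<beta>) = 0}"
    and event_eq: "event = {(\<alpha>,\<beta>,\<gamma>) \<in> cube. sA (\<beta>,\<gamma>) = 0 \<and> sB (\<alpha>,\<gamma>) = 0 \<and> sC (\<alpha>,\<beta>) = 0}"
    by (auto simp: event_A_def event_B_def event_C_def event_def cube_def)
  with assms(4-7) have "measure M3 event_A = 1/4" "measure M3 event_B = 1/4"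
    "measure M3 event_C = 1/4" "measure M3 event = 1/8"
    by simp_all
  then obtain X Y Z where "X \<in> sets lborel" "Y \<in> sets lborel" "Z \<in> sets lborel"
    "X \<subseteq> unit_iv" "Y \<subseteq> unit_iv" "Z \<subseteq> unit_iv"
    "measure lborel X = 1/2" "measure lborel Y = 1/2" "measure lborel Z = 1/2"
    "emeasure M3 (sym_diff event (X \<times> Y \<times> Z)) = 0"
    by (rule event_ae_eq_Times)
  then show ?thesis
    unfolding event_eq Let_def by blast
qed

end
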